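(* Fix an integer $r\ge2$ and $\theta=(\mu,\sigma,\xi)$ with $\sigma>0$, $\xi\in\mathbb{R}$. Let $(Y_1,\ldots,Y_r)$ follow the GEV$_r(\mu,\sigma,\xi)$ distribution and set $Z_j=(Y_j-\mu)/\sigma$. Define $$D_r = -\log\sigma - (1+\xi Z_r)^{-1/\xi} + (1+\xi Z_{r-1})^{-1/\xi} - \Big(\frac1\xi+1\Big)\log(1+\xi Z_r)$$ (for $\xi=0$ as the limit $\xi\to0$). Then $E[D_r] = -\log\sigma - 1 + (1+\xi)\psi(r)$, where $\psi$ is the digamma function, and $E[D_r^2]<\infty$.
   Context: The GEV$_r(\mu,\sigma,\xi)$ distribution is the distribution on $\{y_1>y_2>\cdots>y_r\}$ with density $$f_r(y_1,\ldots,y_r\mid\mu,\sigma,\xi) = \sigma^{-r}\exp\Big\{-(1+\xi z_r)^{-1/\xi} - \Big(\frac1\xi+1\Big)\sum_{j=1}^r \log(1+\xi z_j)\Big\},$$ where $z_j=(y_j-\mu)/\sigma$, supported where $1+\xi z_j>0$ for all $j$; for $\xi=0$ the density is the limit as $\xi\to0$. *)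

theory Defs
  imports "HOL-Analysis.Analysis"
begin

definition gev_z :: "real \<Rightarrow> real \<Rightarrow> real \<Rightarrow> real" where
  "gev_z mu \<sigma> y = (y - mu) / \<sigma>"

definition gev_t :: "real \<Rightarrow> real \<Rightarrow> real" where
  "gev_t xi z = (if xi = 0 then exp (- z) else (1 + xi * z) powr (- 1 / xi))"

definition gev_h :: "real \<Rightarrow> real \<Rightarrow> real" where
  "gev_h xi z = (if xi = 0 then z else (1 / xi + 1) * ln (1 + xi * z))"

definition gev_supp :: "real \<Rightarrow> real \<Rightarrow> bool" where
  "gev_supp xi z \<longleftrightarrow> 1 + xi * z > 0"

definition gev_r_density :: "nat \<Rightarrow> real \<Rightarrow> real \<Rightarrow> real \<Rightarrow> (nat \<Rightarrow> real) \<Rightarrow> real" where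
  "gev_r_density r mu \<sigma> xi y =
     (if (\<forall>j\<in>{1..<r}. y j > y (Suc j)) \<and> (\<forall>j\<in>{1..r}. gev_supp xi (gev_z mu \<sigma> (y j)))
      then \<sigma> powi (- int r) *
           exp (- gev_t xi (gev_z mu \<sigma> (y r))
                - (\<Sum>j=1..r. gev_h xi (gev_z mu \<sigma> (y j))))
      else 0)"

definition gev_r_measure :: "nat \<Rightarrow> real \<Rightarrow> real \<Rightarrow> real \<Rightarrow> (nat \<Rightarrow> real) measure" where
  "gev_r_measure r mu \<sigma> xi =
     density (PiM {1..r} (\<lambda>_. lborel)) (\<lambda>y. ennreal (gev_r_density r mu \<sigma> xi y))"

definition gev_D :: "nat \<Rightarrow> real \<Rightarrow> real \<Rightarrow> real \<Rightarrow> (nat \<Rightarrow> real) \<Rightarrow> real" where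
  "gev_D r mu \<sigma> xi y =
     - ln \<sigma> - gev_t xi (gev_z mu \<sigma> (y r)) + gev_t xi (gev_z mu \<sigma> (y (r - 1)))
     - gev_h xi (gev_z mu \<sigma> (y r))"

end

theory Submission
  imports Defs "HOL-Probability.Distributions"
begin

text \<open>
  Write \<open>T = t(Z)\<close> with \<open>t(z) = (1 + \<xi> z)\<^sup>-\<^sup>1\<^sup>/\<^sup>\<xi>\<close>. The map \<open>y \<mapsto> t((y - \<mu>) / \<sigma>)\<close> is a decreasing
  bijection from the support onto \<open>(0, \<infinity>)\<close> whose Jacobian is the GEV\<open>\<^sub>1\<close> density without
  its factor \<open>exp (- t)\<close>. Under GEV\<open>\<^sub>r\<close> the points \<open>T\<^sub>1 < \<dots> < T\<^sub>r\<close> are therefore the first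
  \<open>r\<close> points of a unit-rate Poisson process: integrating out \<open>y\<^sub>1, \<dots>, y\<^sub>r\<^sub>-\<^sub>1\<close> gives
  \<open>T\<^sub>r ~ \<Gamma>(r)\<close>, and integrating out \<open>y\<^sub>r\<close> turns the GEV\<open>\<^sub>r\<close> density into the
  GEV\<open>\<^sub>r\<^sub>-\<^sub>1\<close> density, so \<open>T\<^sub>r\<^sub>-\<^sub>1 ~ \<Gamma>(r - 1)\<close>.

  On the support \<open>D\<^sub>r = - log \<sigma> - T\<^sub>r + T\<^sub>r\<^sub>-\<^sub>1 + (1 + \<xi>) log T\<^sub>r\<close>, hence
  \<open>E D\<^sub>r = - log \<sigma> - r + (r - 1) + (1 + \<xi>) E log T\<^sub>r\<close>, and \<open>E log T\<^sub>r = \<Gamma>'(r) / \<Gamma>(r) = \<psi>(r)\<close>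
  is obtained by differentiating \<open>E T\<^sub>r\<^sup>h = \<Gamma>(r + h) / \<Gamma>(r)\<close> at \<open>h = 0\<close>. Square
  integrability follows from the Gamma moments and the integrability of \<open>(log T\<^sub>r)\<^sup>2\<close>.
\<close>

lemma absolutely_integrable_on_iff_integrable_lborel:
  fixes f :: "real \<Rightarrow> real"
  assumes "(\<lambda>x. indicator S x * f x) \<in> borel_measurable borel"
  shows "f absolutely_integrable_on S \<longleftrightarrow> integrable lborel (\<lambda>x. indicator S x * f x)"
  unfolding set_integrable_def using assms
  by (subst integrable_completion) (simp_all add: measurable_lborel1 mult.commute)

lemma integral_eq_lborel_integral:
  fixes f :: "real \<Rightarrow> real"
  assumes "(\<lambda>x. indicator S x * f x) \<in> borel_measurable borel" and "f absolutely_integrable_on S"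
  shows "integral S f = (\<integral>x. indicator S x * f x \<partial>lborel)"
  using set_lebesgue_integral_eq_integral(2)[OF assms(2)] assms(1)
  by (simp add: set_lebesgue_integral_def integral_completion measurable_lborel1 mult.commute)

lemma nn_integral_change_variables_inj:
  fixes f g g' :: "real \<Rightarrow> real"
  assumes S: "S \<in> sets borel"
    and der: "\<And>x. x \<in> S \<Longrightarrow> (g has_field_derivative g' x) (at x)"
    and inj: "inj_on g S"
    and nonneg: "\<And>x. x \<in> S \<Longrightarrow> 0 \<le> f (g x)"
    and m1: "(\<lambda>x. indicator (g ` S) x * f x) \<in> borel_measurable borel"
    and m2: "(\<lambda>x. indicator S x * (\<bar>g' x\<bar> * f (g x))) \<in> borel_measurable borel"
  shows "(\<integral>\<^sup>+x. ennreal (indicator (g ` S) x * f x) \<partial>lborel)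
       = (\<integral>\<^sup>+x. ennreal (indicator S x * (\<bar>g' x\<bar> * f (g x))) \<partial>lborel)"
proof -
  let ?F1 = "\<lambda>x. indicator (g ` S) x * f x"
  let ?F2 = "\<lambda>x. indicator S x * (\<bar>g' x\<bar> * f (g x))"
  have nn: "0 \<le> ?F1 x" "0 \<le> ?F2 x" for x using nonneg by (auto simp: indicator_def)
  have "\<And>x. x \<in> S \<Longrightarrow> (g has_field_derivative g' x) (at x within S)"
    using der by (rule has_field_derivative_at_within)
  with S have cov: "\<And>b. ((\<lambda>x. \<bar>g' x\<bar> * f (g x)) absolutely_integrable_on S
        \<and> integral S (\<lambda>x. \<bar>g' x\<bar> * f (g x)) = b)
      \<longleftrightarrow> (f absolutely_integrable_on (g ` S) \<and> integral (g ` S) f = b)"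
    using has_absolute_integral_change_of_variables_1'[of S g g' f] inj by simp
  note a1 = absolutely_integrable_on_iff_integrable_lborel[OF m1]
  note a2 = absolutely_integrable_on_iff_integrable_lborel[OF m2]
  show ?thesis
  proof (cases "integrable lborel ?F2")
    case True
    then have A: "(\<lambda>x. \<bar>g' x\<bar> * f (g x)) absolutely_integrable_on S" using a2 by simp
    with cov have B: "f absolutely_integrable_on (g ` S)"
      and I: "integral (g ` S) f = integral S (\<lambda>x. \<bar>g' x\<bar> * f (g x))" by blast+
    have i1: "integrable lborel ?F1" using B a1 by simp
    have eq: "(\<integral>x. ?F1 x \<partial>lborel) = (\<integral>x. ?F2 x \<partial>lborel)"
      using I integral_eq_lborel_integral[OF m1 B] integral_eq_lborel_integral[OF m2 A] by linarith
    have "(\<integral>\<^sup>+x. ennreal (?F1 x) \<partial>lborel) = ennreal (\<integral>x. ?F1 x \<partial>lborel)"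
      using i1 nn by (intro nn_integral_eq_integral) auto
    also have "\<dots> = (\<integral>\<^sup>+x. ennreal (?F2 x) \<partial>lborel)"
      using True nn unfolding eq by (intro nn_integral_eq_integral[symmetric]) auto
    finally show ?thesis .
  next
    case False
    then have "\<not> integrable lborel ?F1" using a1 a2 cov by blast
    then have "(\<integral>\<^sup>+x. ennreal (?F1 x) \<partial>lborel) = \<infinity>"
      using m1 nn by (auto simp: integrable_iff_bounded measurable_lborel1 less_top[symmetric])
    moreover have "(\<integral>\<^sup>+x. ennreal (?F2 x) \<partial>lborel) = \<infinity>"
      using m2 nn False by (auto simp: integrable_iff_bounded measurable_lborel1 less_top[symmetric])
    ultimately show ?thesis by simp
  qed
qed

lemma nn_integral_exp_minus_tail:
  "(\<integral>\<^sup>+t. ennreal (indicator {a<..} t * exp (- t)) \<partial>lborel) = ennreal (exp (- a))"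
proof -
  have "(\<integral>\<^sup>+t. ennreal (indicator {a<..} t * exp (- t)) \<partial>lborel)
      = (\<integral>\<^sup>+t. ennreal (exp (- t)) * indicator {a..} t \<partial>lborel)"
    using AE_lborel_singleton[of a]
    by (intro nn_integral_cong_AE) (auto elim!: eventually_mono simp: indicator_def)
  also have "\<dots> = ennreal (0 - (- exp (- a)))"
  proof (rule nn_integral_FTC_atLeast)
    have "((\<lambda>t::real. exp (- t)) \<longlongrightarrow> 0) at_top"
      by (rule filterlim_compose[OF exp_at_bot filterlim_uminus_at_bot_at_top])
    from tendsto_minus[OF this] show "((\<lambda>t::real. - exp (- t)) \<longlongrightarrow> 0) at_top" by simp
  qed (auto intro!: derivative_eq_intros)
  finally show ?thesis by simp
qed

lemma nn_integral_power_div_fact: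
  fixes a :: real
  assumes "0 \<le> a"
  shows "(\<integral>\<^sup>+t. ennreal (indicator {0<..<a} t * (t ^ n / fact n)) \<partial>lborel)
       = ennreal (a ^ Suc n / fact (Suc n))"
proof -
  have "(\<integral>\<^sup>+t. ennreal (indicator {0<..<a} t * (t ^ n / fact n)) \<partial>lborel)
      = (\<integral>\<^sup>+t. ennreal (t ^ n / fact n) * indicator {0..a} t \<partial>lborel)"
  proof (rule nn_integral_cong_AE)
    have "AE t in lborel. t \<noteq> 0" "AE t in lborel. t \<noteq> a" by (simp_all add: AE_lborel_singleton)
    then show "AE t in lborel. ennreal (indicator {0<..<a} t * (t ^ n / fact n))
        = ennreal (t ^ n / fact n) * indicator {0..a} t"
      by eventually_elim (auto simp: indicator_def)
  qed
  also have "\<dots> = ennreal (a ^ Suc n / fact (Suc n) - 0 ^ Suc n / fact (Suc n))"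
  proof (rule nn_integral_FTC_Icc)
    fix x :: real
    have "((\<lambda>t. t ^ Suc n / fact (Suc n))
        has_real_derivative (real (Suc n) * x ^ n) / fact (Suc n)) (at x)"
      using DERIV_pow[of "Suc n" x UNIV] by (intro DERIV_cdivide) simp
    then show "((\<lambda>t. t ^ Suc n / fact (Suc n)) has_real_derivative x ^ n / fact n) (at x)"
      by (simp add: fact_Suc del: of_nat_Suc)
  qed (use assms in \<open>auto intro!: continuous_intros\<close>)
  finally show ?thesis by simp
qed

lemma distributed_lborelI:
  fixes X :: "'a \<Rightarrow> real" and f :: "real \<Rightarrow> real"
  assumes X: "X \<in> borel_measurable M" and f: "f \<in> borel_measurable borel"
    and law: "\<And>A. A \<in> sets borel \<Longrightarrow>
      (\<integral>\<^sup>+x. ennreal (indicator A (X x)) \<partial>M) = (\<integral>\<^sup>+t. ennreal (f t * indicator A t) \<partial>lborel)"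
  shows "distributed M lborel X f"
  unfolding distributed_def
proof (intro conjI)
  show "distr M lborel X = density lborel f"
  proof (rule measure_eqI)
    fix A assume "A \<in> sets (distr M lborel X)"
    then have A: "A \<in> sets borel" by simp
    have "emeasure (distr M lborel X) A = emeasure M (X -` A \<inter> space M)"
      using X A by (intro emeasure_distr) auto
    also have "\<dots> = (\<integral>\<^sup>+x. indicator (X -` A \<inter> space M) x \<partial>M)"
      using X A by (intro nn_integral_indicator[symmetric]) measurable
    also have "\<dots> = (\<integral>\<^sup>+x. ennreal (indicator A (X x)) \<partial>M)"
      by (intro nn_integral_cong) (simp add: indicator_def)
    also have "\<dots> = emeasure (density lborel f) A"
      using A f by (subst law[OF A]) (simp add: emeasure_density ennreal_mult'' ennreal_indicator)
    finally show "emeasure (distr M lborel X) A = emeasure (density lborel f) A" .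
  qed simp
qed (use X f in auto)

lemma nn_integral_PiM_Suc_inner:
  fixes f :: "(nat \<Rightarrow> real) \<Rightarrow> ennreal"
  assumes "f \<in> borel_measurable (PiM {1..Suc n} (\<lambda>_. lborel))"
  shows "(\<integral>\<^sup>+y. f y \<partial>PiM {1..Suc n} (\<lambda>_. lborel))
       = (\<integral>\<^sup>+u. (\<integral>\<^sup>+y. f (y(Suc n := u)) \<partial>PiM {1..n} (\<lambda>_. lborel)) \<partial>lborel)"
proof -
  interpret product_sigma_finite "\<lambda>_. lborel :: real measure" by standard
  have split: "{1..Suc n} = insert (Suc n) {1..n}" by auto
  show ?thesis
    using assms unfolding split by (intro product_nn_integral_insert_rev) auto
qed

lemma nn_integral_PiM_Suc_outer:
  fixes f :: "(nat \<Rightarrow> real) \<Rightarrow> ennreal"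
  assumes "f \<in> borel_measurable (PiM {1..Suc n} (\<lambda>_. lborel))"
  shows "(\<integral>\<^sup>+y. f y \<partial>PiM {1..Suc n} (\<lambda>_. lborel))
       = (\<integral>\<^sup>+y. (\<integral>\<^sup>+u. f (y(Suc n := u)) \<partial>lborel) \<partial>PiM {1..n} (\<lambda>_. lborel))"
proof -
  interpret product_sigma_finite "\<lambda>_. lborel :: real measure" by standard
  have split: "{1..Suc n} = insert (Suc n) {1..n}" by auto
  show ?thesis
    using assms unfolding split by (intro product_nn_integral_insert) auto
qed

section \<open>Logarithmic moments of the Erlang distribution\<close>

lemma integrable_erlang_density_power: "integrable lborel (\<lambda>t. erlang_density k 1 t * t ^ i)"
proof (rule integrableI_nonneg)
  show "AE t in lborel. 0 \<le> erlang_density k 1 t * t ^ i"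
    by (intro AE_I2) (simp add: erlang_density_def)
  show "(\<integral>\<^sup>+t. ennreal (erlang_density k 1 t * t ^ i) \<partial>lborel) < \<infinity>"
    using nn_integral_erlang_ith_moment[of 1 k i] by (simp add: ennreal_fact)
qed simp

lemma erlang_density_Suc_div_le: "erlang_density (Suc m) 1 t / t \<le> erlang_density m 1 t"
proof (cases "t > 0")
  case True
  then have "erlang_density (Suc m) 1 t / t = erlang_density m 1 t / real (Suc m)"
    by (simp add: erlang_density_def fact_Suc)
  also have "\<dots> \<le> erlang_density m 1 t / 1"
    by (intro divide_left_mono) auto
  finally show ?thesis by simp
qed (auto simp: erlang_density_def)

lemma abs_ln_le:
  fixes t :: real
  assumes t: "t > 0"
  shows "\<bar>ln t\<bar> \<le> 1 / t + t"
proof -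
  have "ln t \<le> t - 1" using ln_le_minus_one[OF t] .
  moreover have "- ln t \<le> 1 / t - 1" using ln_le_minus_one[of "1 / t"] t by (simp add: ln_div)
  moreover have "0 < 1 / t" using t by simp
  ultimately show ?thesis using t by linarith
qed

lemma ln_squared_le:
  fixes t :: real
  assumes t: "t > 0"
  shows "(ln t)\<^sup>2 \<le> 4 / t + t\<^sup>2"
proof (cases "t \<ge> 1")
  case True
  then have "0 \<le> ln t" "ln t \<le> t" using ln_le_minus_one[OF t] by auto
  then have "(ln t)\<^sup>2 \<le> t\<^sup>2" by (intro power_mono) auto
  then show ?thesis using t by (simp add: add_increasing)
next
  case False
  have s: "sqrt t > 0" using t by simp
  have "- ln (sqrt t) \<le> 1 / sqrt t"
    using ln_le_minus_one[of "1 / sqrt t"] s by (simp add: ln_div)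
  moreover have "ln t = 2 * ln (sqrt t)" "ln (sqrt t) \<le> 0" using False t by (simp_all add: ln_sqrt)
  ultimately have "(- ln t)\<^sup>2 \<le> (2 / sqrt t)\<^sup>2" by (intro power_mono) auto
  also have "(2 / sqrt t)\<^sup>2 = 4 / t" using t by (simp add: power_divide)
  finally have "(ln t)\<^sup>2 \<le> 4 / t" by simp
  then show ?thesis using zero_le_power2[of t] by linarith
qed

lemma abs_powr_diff_quotient_le:
  fixes t h :: real
  assumes t: "t > 0" and h: "0 < h" "h \<le> 1"
  shows "\<bar>(t powr h - 1) / h\<bar> \<le> \<bar>ln t\<bar> * (1 + t)"
proof -
  define x where "x = h * ln t"
  have e: "t powr h = exp x" using t by (simp add: powr_def x_def mult.commute)
  show ?thesis
  proof (cases "t \<ge> 1")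
    case True
    then have x0: "0 \<le> x" using h by (simp add: x_def)
    have "1 - x \<le> exp (- x)" using exp_ge_add_one_self[of "- x"] by simp
    then have "(1 - x) * exp x \<le> 1" by (metis exp_minus_inverse mult_right_mono exp_ge_zero mult.commute)
    then have "exp x - 1 \<le> x * exp x" by (simp add: algebra_simps)
    also have "exp x \<le> t" using powr_mono[of h 1 t] h True e by simp
    then have "x * exp x \<le> x * t" using x0 by (rule mult_left_mono)
    finally have "exp x - 1 \<le> h * (ln t * t)" by (simp add: x_def mult_ac)
    then have "(exp x - 1) / h \<le> ln t * t" using h by (simp add: pos_divide_le_eq mult.commute)
    moreover have "0 \<le> exp x - 1" using x0 by simp
    ultimately show ?thesis using h ln_ge_zero[OF True] unfolding e by (simp add: algebra_simps)
  next
    case False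
    then have x0: "x \<le> 0" and lt: "ln t < 0" using h t by (simp_all add: x_def mult_nonneg_nonpos)
    have "1 + x \<le> exp x" "exp x \<le> 1" using x0 by (simp_all add: exp_ge_add_one_self)
    then have "\<bar>exp x - 1\<bar> \<le> - x" by linarith
    then have "\<bar>exp x - 1\<bar> \<le> h * \<bar>ln t\<bar>" using lt by (simp add: x_def)
    then have "\<bar>(exp x - 1) / h\<bar> \<le> \<bar>ln t\<bar>" using h by (simp add: abs_div pos_divide_le_eq mult.commute)
    also have "\<bar>ln t\<bar> \<le> \<bar>ln t\<bar> * (1 + t)" using t by (simp add: algebra_simps)
    finally show ?thesis unfolding e .
  qed
qed

lemma integrable_erlang_density_abs_ln_bound:
  "integrable lborel (\<lambda>t. erlang_density (Suc m) 1 t * (\<bar>ln t\<bar> * (1 + t)))"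
proof (rule Bochner_Integration.integrable_bound)
  let ?e = "\<lambda>k t. erlang_density k 1 t"
  show "integrable lborel
      (\<lambda>t. ?e m t * t ^ 0 + ?e (Suc m) t * t ^ 0 + ?e (Suc m) t * t ^ 1 + ?e (Suc m) t * t ^ 2)"
    by (intro Bochner_Integration.integrable_add integrable_erlang_density_power)
  show "AE t in lborel. norm (?e (Suc m) t * (\<bar>ln t\<bar> * (1 + t)))
      \<le> norm (?e m t * t ^ 0 + ?e (Suc m) t * t ^ 0 + ?e (Suc m) t * t ^ 1 + ?e (Suc m) t * t ^ 2)"
  proof (rule AE_I2)
    fix t :: real
    show "norm (?e (Suc m) t * (\<bar>ln t\<bar> * (1 + t)))
      \<le> norm (?e m t * t ^ 0 + ?e (Suc m) t * t ^ 0 + ?e (Suc m) t * t ^ 1 + ?e (Suc m) t * t ^ 2)"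
    proof (cases "t > 0")
      case True
      have "?e (Suc m) t * (\<bar>ln t\<bar> * (1 + t)) \<le> ?e (Suc m) t * ((1 / t + t) * (1 + t))"
        using abs_ln_le[OF True] True by (intro mult_left_mono mult_right_mono) auto
      also have "\<dots> = ?e (Suc m) t / t + ?e (Suc m) t + ?e (Suc m) t * t + ?e (Suc m) t * t\<^sup>2"
        using True by (simp add: field_simps power2_eq_square)
      also have "\<dots> \<le> ?e m t + ?e (Suc m) t + ?e (Suc m) t * t + ?e (Suc m) t * t\<^sup>2"
        using erlang_density_Suc_div_le[of m t] by simp
      finally show ?thesis using True by simp
    qed (simp add: erlang_density_def)
  qed
qed simp

lemma integrable_erlang_density_ln: "integrable lborel (\<lambda>t. erlang_density (Suc m) 1 t * ln t)"
proof (rule Bochner_Integration.integrable_bound[OF integrable_erlang_density_abs_ln_bound[of m]])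
  show "AE t in lborel. norm (erlang_density (Suc m) 1 t * ln t)
      \<le> norm (erlang_density (Suc m) 1 t * (\<bar>ln t\<bar> * (1 + t)))"
  proof (rule AE_I2)
    fix t :: real
    show "norm (erlang_density (Suc m) 1 t * ln t) \<le> norm (erlang_density (Suc m) 1 t * (\<bar>ln t\<bar> * (1 + t)))"
    proof (cases "t > 0")
      case True
      then have "\<bar>ln t\<bar> \<le> \<bar>ln t\<bar> * (1 + t)" by (simp add: algebra_simps)
      then show ?thesis using True by (simp add: abs_mult mult_left_mono)
    qed (simp add: erlang_density_def)
  qed
qed simp

lemma integrable_erlang_density_ln_squared:
  "integrable lborel (\<lambda>t. erlang_density (Suc m) 1 t * (ln t)\<^sup>2)"
proof (rule Bochner_Integration.integrable_bound)
  let ?e = "\<lambda>k t. erlang_density k 1 t"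
  show "integrable lborel (\<lambda>t. 4 * (?e m t * t ^ 0) + ?e (Suc m) t * t ^ 2)"
    by (intro Bochner_Integration.integrable_add Bochner_Integration.integrable_mult_right
        integrable_erlang_density_power)
  show "AE t in lborel. norm (?e (Suc m) t * (ln t)\<^sup>2) \<le> norm (4 * (?e m t * t ^ 0) + ?e (Suc m) t * t ^ 2)"
  proof (rule AE_I2)
    fix t :: real
    show "norm (?e (Suc m) t * (ln t)\<^sup>2) \<le> norm (4 * (?e m t * t ^ 0) + ?e (Suc m) t * t ^ 2)"
    proof (cases "t > 0")
      case True
      have "?e (Suc m) t * (ln t)\<^sup>2 \<le> ?e (Suc m) t * (4 / t + t\<^sup>2)"
        using ln_squared_le[OF True] by (intro mult_left_mono) auto
      also have "\<dots> = 4 * (?e (Suc m) t / t) + ?e (Suc m) t * t\<^sup>2" by (simp add: field_simps)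
      also have "\<dots> \<le> 4 * ?e m t + ?e (Suc m) t * t\<^sup>2"
        using erlang_density_Suc_div_le[of m t] by simp
      finally show ?thesis by simp
    qed (simp add: erlang_density_def)
  qed
qed simp

lemma erlang_density_powr_integral:
  assumes h: "h \<ge> 0"
  shows "integrable lborel (\<lambda>t. erlang_density k 1 t * t powr h)"
    and "(\<integral>t. erlang_density k 1 t * t powr h \<partial>lborel) = Gamma (real k + 1 + h) / fact k"
proof -
  define x where "x = real k + 1 + h"
  have x: "x > 0" using h by (simp add: x_def)
  have eq: "erlang_density k 1 t * t powr h = indicator {0..} t * t powr (x - 1) / exp t / fact k" for t
  proof (cases "t > 0")
    case True
    have "t powr (x - 1) = t ^ k * t powr h"
      using True by (simp add: x_def powr_add powr_realpow)
    then show ?thesis using True by (simp add: erlang_density_def exp_minus field_simps)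
  qed (auto simp: erlang_density_def indicator_def)
  have pos: "0 \<le> indicator {0..} t * t powr (x - 1) / exp t" for t :: real
    by (simp add: indicator_def)
  have nn: "(\<integral>\<^sup>+t. ennreal (indicator {0..} t * t powr (x - 1) / exp t) \<partial>lborel) = ennreal (Gamma x)"
    using Gamma_conv_nn_integral_real[OF x] by simp
  have int: "integrable lborel (\<lambda>t. indicator {0..} t * t powr (x - 1) / exp t)"
    using nn pos by (intro integrableI_nonneg) auto
  then show "integrable lborel (\<lambda>t. erlang_density k 1 t * t powr h)"
    unfolding eq by (rule Bochner_Integration.integrable_divide)
  have "ennreal (\<integral>t. indicator {0..} t * t powr (x - 1) / exp t \<partial>lborel) = ennreal (Gamma x)"
    using nn_integral_eq_integral[OF int] pos nn by simp
  moreover have "0 \<le> (\<integral>t. indicator {0..} t * t powr (x - 1) / exp t \<partial>lborel)"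
    using pos by (intro integral_nonneg_AE) auto
  ultimately have G: "(\<integral>t. indicator {0..} t * t powr (x - 1) / exp t \<partial>lborel) = Gamma x"
    using Gamma_real_pos[OF x] by simp
  show "(\<integral>t. erlang_density k 1 t * t powr h \<partial>lborel) = Gamma (real k + 1 + h) / fact k"
    unfolding eq integral_divide_zero G by (simp add: x_def)
qed

lemma tendsto_powr_diff_quotient:
  fixes t :: real
  assumes "t > 0"
  shows "((\<lambda>h. (t powr h - 1) / h) \<longlongrightarrow> ln t) (at 0)"
proof -
  have "((\<lambda>h. t powr h) has_real_derivative ln t) (at 0)"
    using assms by (auto intro!: derivative_eq_intros)
  then show ?thesis using DERIV_D assms by fastforce
qed

lemma erlang_density_powr_diff_quotient_integral:
  assumes h: "h > 0"
  shows "(\<integral>t. erlang_density (Suc m) 1 t * ((t powr h - 1) / h) \<partial>lborel)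
       = (Gamma (real m + 2 + h) - Gamma (real m + 2)) / h / fact (Suc m)"
proof -
  let ?e = "erlang_density (Suc m) 1"
  have "(\<lambda>t. ?e t * ((t powr h - 1) / h)) = (\<lambda>t. (?e t * t powr h - ?e t * t powr 0) / h)"
    by (auto simp: fun_eq_iff field_simps erlang_density_def)
  then have "(\<integral>t. ?e t * ((t powr h - 1) / h) \<partial>lborel)
      = ((\<integral>t. ?e t * t powr h \<partial>lborel) - (\<integral>t. ?e t * t powr 0 \<partial>lborel)) / h"
    using erlang_density_powr_integral(1)[of h] erlang_density_powr_integral(1)[of 0] h by simp
  also have "\<dots> = (Gamma (real m + 2 + h) / fact (Suc m) - Gamma (real m + 2) / fact (Suc m)) / h"
    using erlang_density_powr_integral(2)[of h] erlang_density_powr_integral(2)[of 0] h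
    by (simp add: add_ac)
  finally show ?thesis by (simp add: diff_divide_distrib mult_ac)
qed

text \<open>The integral is the derivative at \<open>h = 0\<close> of \<open>\<integral> e(t) t\<^sup>h dt = \<Gamma>(m + 2 + h) / (m + 1)!\<close>;
  the difference quotients along \<open>h = 1 / (j + 1)\<close> converge by dominated convergence, with the
  bound \<open>abs_powr_diff_quotient_le\<close>.\<close>
lemma erlang_density_ln_integral:
  "(\<integral>t. erlang_density (Suc m) 1 t * ln t \<partial>lborel) = Digamma (real m + 2)"
proof -
  let ?e = "erlang_density (Suc m) 1"
  define s where "s = real m + 2"
  define hs where "hs = (\<lambda>j. inverse (real (Suc j)))"
  define q where "q = (\<lambda>j t. ?e t * ((t powr hs j - 1) / hs j))"
  have hs: "0 < hs j" "hs j \<le> 1" for j by (auto simp: hs_def field_simps)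
  have hs_lim: "filterlim hs (at 0) sequentially"
    unfolding filterlim_at hs_def using LIMSEQ_inverse_real_of_nat by simp
  have "s \<notin> \<int>\<^sub>\<le>\<^sub>0" by (auto simp: s_def dest: nonpos_Ints_nonpos)
  then have "((\<lambda>h. (Gamma (s + h) - Gamma s) / h) \<longlongrightarrow> Gamma s * Digamma s) (at 0)"
    by (rule DERIV_D[OF has_field_derivative_Gamma])
  then have "(\<lambda>j. (\<integral>t. q j t \<partial>lborel)) \<longlonglongrightarrow> Gamma s * Digamma s / fact (Suc m)"
    unfolding q_def erlang_density_powr_diff_quotient_integral[OF hs(1)] s_def[symmetric]
    by (intro tendsto_divide filterlim_compose[OF _ hs_lim]) auto
  moreover have "(\<lambda>j. (\<integral>t. q j t \<partial>lborel)) \<longlonglongrightarrow> (\<integral>t. ?e t * ln t \<partial>lborel)"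
  proof (rule integral_dominated_convergence[OF _ _ integrable_erlang_density_abs_ln_bound])
    show "AE t in lborel. (\<lambda>j. q j t) \<longlonglongrightarrow> ?e t * ln t"
    proof (rule AE_I2)
      fix t :: real
      show "(\<lambda>j. q j t) \<longlonglongrightarrow> ?e t * ln t"
      proof (cases "t > 0")
        case True
        then show ?thesis unfolding q_def
          by (intro tendsto_mult tendsto_const filterlim_compose[OF tendsto_powr_diff_quotient hs_lim])
      qed (simp add: q_def erlang_density_def)
    qed
    show "AE t in lborel. norm (q j t) \<le> ?e t * (\<bar>ln t\<bar> * (1 + t))" for j
    proof (rule AE_I2)
      fix t :: real
      show "norm (q j t) \<le> ?e t * (\<bar>ln t\<bar> * (1 + t))"
      proof (cases "t > 0")
        case True
        have "norm (q j t) = ?e t * \<bar>(t powr hs j - 1) / hs j\<bar>" by (simp add: q_def abs_mult)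
        also have "\<dots> \<le> ?e t * (\<bar>ln t\<bar> * (1 + t))"
          using abs_powr_diff_quotient_le[OF True hs] by (intro mult_left_mono) auto
        finally show ?thesis .
      qed (simp add: q_def erlang_density_def)
    qed
  qed (simp_all add: q_def)
  ultimately have "Gamma s * Digamma s / fact (Suc m) = (\<integral>t. ?e t * ln t \<partial>lborel)"
    by (rule LIMSEQ_unique)
  moreover have "Gamma s = fact (Suc m)"
    using Gamma_fact[of "Suc m"] by (simp add: s_def add.commute)
  ultimately show ?thesis by (simp add: s_def)
qed

lemma (in prob_space) erlang_distributed_ln:
  assumes X: "distributed M lborel X (erlang_density (Suc m) 1)"
  shows "integrable M (\<lambda>x. ln (X x))"
    and "expectation (\<lambda>x. ln (X x)) = Digamma (real m + 2)"
    and "integrable M (\<lambda>x. (ln (X x))\<^sup>2)"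
proof -
  show "integrable M (\<lambda>x. ln (X x))"
    using distributed_integrable[OF X, of ln] integrable_erlang_density_ln by simp
  show "expectation (\<lambda>x. ln (X x)) = Digamma (real m + 2)"
    using distributed_integral[OF X, of ln] erlang_density_ln_integral by simp
  show "integrable M (\<lambda>x. (ln (X x))\<^sup>2)"
    using distributed_integrable[OF X, of "\<lambda>t. (ln t)\<^sup>2"] integrable_erlang_density_ln_squared by simp
qed

lemma square_sum4_le: "(a + b + c + d)\<^sup>2 \<le> 4 * (a\<^sup>2 + b\<^sup>2 + c\<^sup>2 + d\<^sup>2)" for a b c d :: real
proof -
  have "0 \<le> (a - b)\<^sup>2 + (a - c)\<^sup>2 + (a - d)\<^sup>2 + (b - c)\<^sup>2 + (b - d)\<^sup>2 + (c - d)\<^sup>2"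
    by simp
  then show ?thesis by (simp add: power2_eq_square algebra_simps)
qed

lemma (in prob_space) erlang_log_statistic:
  fixes X Y :: "'a \<Rightarrow> real" and a c :: real
  assumes X: "distributed M lborel X (erlang_density (Suc n) 1)"
    and Y: "distributed M lborel Y (erlang_density n 1)"
  defines "D \<equiv> \<lambda>x. c - X x + Y x + a * ln (X x)"
  shows "integrable M D"
    and "expectation D = c - 1 + a * Digamma (real n + 2)"
    and "integrable M (\<lambda>x. (D x)\<^sup>2)"
proof -
  have moment: "integrable M (\<lambda>x. Z x ^ i) \<and> expectation (\<lambda>x. Z x ^ i) = fact (k + i) / fact k"
    if "distributed M lborel Z (erlang_density k 1)" for Z k i
    using erlang_ith_moment_integrable[OF _ that] erlang_ith_moment[OF _ that] by simp
  have iX: "integrable M X" and eX: "expectation X = real n + 2"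
    using moment[OF X, of 1] by (simp_all add: fact_Suc)
  have iY: "integrable M Y" and eY: "expectation Y = real n + 1"
    using moment[OF Y, of 1] by (simp_all add: fact_Suc)
  note L = erlang_distributed_ln[OF X]
  show iD: "integrable M D"
    unfolding D_def using iX iY L(1) by auto
  have "expectation D = c - expectation X + expectation Y + a * expectation (\<lambda>x. ln (X x))"
    unfolding D_def using iX iY L(1) by (simp add: prob_space)
  then show "expectation D = c - 1 + a * Digamma (real n + 2)"
    by (simp add: eX eY L(2))
  let ?B = "\<lambda>x. 4 * (c\<^sup>2 + (X x)\<^sup>2 + (Y x)\<^sup>2 + a\<^sup>2 * (ln (X x))\<^sup>2)"
  show "integrable M (\<lambda>x. (D x)\<^sup>2)"
  proof (rule Bochner_Integration.integrable_bound)
    show "integrable M ?B"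
      using moment[OF X, of 2] moment[OF Y, of 2] L(3) by auto
    show "(\<lambda>x. (D x)\<^sup>2) \<in> borel_measurable M"
      using borel_measurable_integrable[OF iD] by measurable
    show "AE x in M. norm ((D x)\<^sup>2) \<le> norm (?B x)"
    proof (rule AE_I2)
      fix x
      have "(D x)\<^sup>2 \<le> ?B x"
        using square_sum4_le[of c "- X x" "Y x" "a * ln (X x)"]
        by (simp add: D_def power_mult_distrib)
      then show "norm ((D x)\<^sup>2) \<le> norm (?B x)" by simp
    qed
  qed
qed

section \<open>The standardising transformation\<close>

definition gev_T :: "real \<Rightarrow> real \<Rightarrow> real \<Rightarrow> real \<Rightarrow> real" where
  "gev_T mu \<sigma> xi y = gev_t xi (gev_z mu \<sigma> y)"

definition gev_support :: "real \<Rightarrow> real \<Rightarrow> real \<Rightarrow> real \<Rightarrow> bool" where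
  "gev_support mu \<sigma> xi y \<longleftrightarrow> gev_supp xi (gev_z mu \<sigma> y)"

text \<open>The GEV\<open>\<^sub>1\<close> density is \<open>exp (- gev_T y) * gev_weight y\<close>, and \<open>gev_weight\<close> is
  the Jacobian \<open>\<bar>d gev_T / dy\<bar>\<close> on the support.\<close>
definition gev_weight :: "real \<Rightarrow> real \<Rightarrow> real \<Rightarrow> real \<Rightarrow> real" where
  "gev_weight mu \<sigma> xi y =
     (if gev_support mu \<sigma> xi y then exp (- gev_h xi (gev_z mu \<sigma> y)) / \<sigma> else 0)"

definition gev_T_inv :: "real \<Rightarrow> real \<Rightarrow> real \<Rightarrow> real \<Rightarrow> real" where
  "gev_T_inv mu \<sigma> xi t =
     (if xi = 0 then mu - \<sigma> * ln t else mu + \<sigma> * (t powr (- xi) - 1) / xi)"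

lemma borel_measurable_gev_T[measurable]: "gev_T mu \<sigma> xi \<in> borel_measurable borel"
  unfolding gev_T_def[abs_def] gev_t_def gev_z_def by measurable

lemma pred_gev_support[measurable]: "Measurable.pred borel (gev_support mu \<sigma> xi)"
  unfolding gev_support_def[abs_def] gev_supp_def gev_z_def by measurable

lemma borel_measurable_gev_weight[measurable]: "gev_weight mu \<sigma> xi \<in> borel_measurable borel"
  unfolding gev_weight_def[abs_def] gev_support_def gev_supp_def gev_h_def gev_z_def
  by measurable

lemma gev_weight_eq_0: "\<not> gev_support mu \<sigma> xi y \<Longrightarrow> gev_weight mu \<sigma> xi y = 0"
  by (simp add: gev_weight_def)

context
  fixes mu \<sigma> xi :: real
  assumes \<sigma>_pos: "\<sigma> > 0"
begin

lemma gev_weight_nonneg: "0 \<le> gev_weight mu \<sigma> xi y"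
  using \<sigma>_pos by (simp add: gev_weight_def)

lemma gev_T_pos: "gev_support mu \<sigma> xi y \<Longrightarrow> 0 < gev_T mu \<sigma> xi y"
  by (auto simp: gev_T_def gev_support_def gev_t_def gev_supp_def)

lemma gev_T_gev_T_inv:
  assumes t: "t > 0"
  shows "gev_support mu \<sigma> xi (gev_T_inv mu \<sigma> xi t)" and "gev_T mu \<sigma> xi (gev_T_inv mu \<sigma> xi t) = t"
proof -
  have "gev_support mu \<sigma> xi (gev_T_inv mu \<sigma> xi t) \<and> gev_T mu \<sigma> xi (gev_T_inv mu \<sigma> xi t) = t"
  proof (cases "xi = 0")
    case True
    then show ?thesis
      using t \<sigma>_pos by (simp add: gev_support_def gev_T_def gev_T_inv_def gev_t_def gev_supp_def gev_z_def)
  next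
    case False
    have "1 + xi * gev_z mu \<sigma> (gev_T_inv mu \<sigma> xi t) = t powr (- xi)"
      using False \<sigma>_pos by (simp add: gev_T_inv_def gev_z_def)
    moreover have "(t powr (- xi)) powr (- 1 / xi) = t"
      using False t by (simp add: powr_powr)
    ultimately show ?thesis
      using t False by (simp add: gev_support_def gev_T_def gev_t_def gev_supp_def)
  qed
  then show "gev_support mu \<sigma> xi (gev_T_inv mu \<sigma> xi t)" "gev_T mu \<sigma> xi (gev_T_inv mu \<sigma> xi t) = t"
    by auto
qed

lemma gev_T_inv_gev_T: "gev_support mu \<sigma> xi y \<Longrightarrow> gev_T_inv mu \<sigma> xi (gev_T mu \<sigma> xi y) = y"
proof (cases "xi = 0")
  case True
  then show ?thesis using \<sigma>_pos by (simp add: gev_T_def gev_T_inv_def gev_t_def gev_z_def)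
next
  case False
  let ?b = "1 + xi * gev_z mu \<sigma> y"
  assume "gev_support mu \<sigma> xi y"
  then have "?b > 0" by (simp add: gev_support_def gev_supp_def)
  then have "(?b powr (- 1 / xi)) powr (- xi) = ?b" using False by (simp add: powr_powr)
  then have "gev_T mu \<sigma> xi y powr (- xi) = ?b" using False by (simp add: gev_T_def gev_t_def)
  then show ?thesis using False \<sigma>_pos by (simp add: gev_T_inv_def gev_z_def field_simps)
qed

lemma gev_h_eq_ln_gev_T:
  assumes "gev_support mu \<sigma> xi y"
  shows "gev_h xi (gev_z mu \<sigma> y) = - (1 + xi) * ln (gev_T mu \<sigma> xi y)"
proof (cases "xi = 0")
  case True
  then show ?thesis by (simp add: gev_T_def gev_t_def gev_h_def)
next
  case False
  let ?b = "1 + xi * gev_z mu \<sigma> y"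
  have "?b > 0" using assms by (simp add: gev_support_def gev_supp_def)
  then have "ln (gev_T mu \<sigma> xi y) = (- 1 / xi) * ln ?b"
    using False by (simp add: gev_T_def gev_t_def ln_powr)
  then show ?thesis using False by (simp add: gev_h_def field_simps)
qed

lemma has_field_derivative_gev_T_inv:
  assumes t: "t > 0"
  shows "(gev_T_inv mu \<sigma> xi has_field_derivative (- \<sigma> * t powr (- xi - 1))) (at t)"
proof (cases "xi = 0")
  case True
  have "((\<lambda>t. mu - \<sigma> * ln t) has_field_derivative (- \<sigma> * t powr (- xi - 1))) (at t)"
    using t True by (auto intro!: derivative_eq_intros simp: powr_minus_divide)
  then show ?thesis using True by (simp add: gev_T_inv_def[abs_def])
next
  case False
  have "((\<lambda>t. mu + \<sigma> * (t powr (- xi) - 1) / xi)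
          has_field_derivative (- \<sigma> * t powr (- xi - 1))) (at t)"
    using t False by (auto intro!: derivative_eq_intros simp: field_simps)
  then show ?thesis using False by (simp add: gev_T_inv_def[abs_def])
qed

lemma gev_T_inv_strict_antimono:
  assumes "0 < s" "s < t"
  shows "gev_T_inv mu \<sigma> xi t < gev_T_inv mu \<sigma> xi s"
proof -
  consider "xi = 0" | "xi > 0" | "xi < 0" by linarith
  then show ?thesis
  proof cases
    case 1
    then show ?thesis using assms \<sigma>_pos by (simp add: gev_T_inv_def)
  next
    case 2
    then have "t powr (- xi) < s powr (- xi)" using assms by (simp add: powr_less_mono2_neg)
    then show ?thesis using 2 \<sigma>_pos by (simp add: gev_T_inv_def divide_strict_right_mono)
  next
    case 3
    then have "s powr (- xi) < t powr (- xi)" using assms by (simp add: powr_less_mono2)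
    then have "(t powr (- xi) - 1) / xi < (s powr (- xi) - 1) / xi"
      using 3 by (simp add: divide_strict_right_mono_neg)
    then have "\<sigma> * ((t powr (- xi) - 1) / xi) < \<sigma> * ((s powr (- xi) - 1) / xi)"
      using \<sigma>_pos by (rule mult_strict_left_mono)
    then show ?thesis using 3 by (simp add: gev_T_inv_def)
  qed
qed

lemma inj_on_gev_T_inv: "inj_on (gev_T_inv mu \<sigma> xi) {0<..}"
  by (rule inj_onI) (metis gev_T_gev_T_inv(2) greaterThan_iff)

lemma gev_T_inv_image: "gev_T_inv mu \<sigma> xi ` {0<..} = {y. gev_support mu \<sigma> xi y}"
  using gev_T_gev_T_inv gev_T_inv_gev_T gev_T_pos
  by (force intro: image_eqI[where x = "gev_T mu \<sigma> xi _"])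

lemma gev_T_less_iff:
  assumes a: "gev_support mu \<sigma> xi a" and b: "gev_support mu \<sigma> xi b"
  shows "gev_T mu \<sigma> xi b < gev_T mu \<sigma> xi a \<longleftrightarrow> a < b"
proof -
  have less: "a' < b'" if "gev_support mu \<sigma> xi a'" "gev_support mu \<sigma> xi b'"
    and "gev_T mu \<sigma> xi b' < gev_T mu \<sigma> xi a'" for a' b'
    using gev_T_inv_strict_antimono[OF gev_T_pos[OF that(2)] that(3)]
    by (simp add: gev_T_inv_gev_T that(1,2))
  have "gev_T mu \<sigma> xi a \<noteq> gev_T mu \<sigma> xi b" if "a < b"
    using that gev_T_inv_gev_T[OF a] gev_T_inv_gev_T[OF b] by force
  then show ?thesis using less[OF a b] less[OF b a] by force
qed

lemma gev_weight_gev_T_inv: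
  assumes t: "t > 0"
  shows "\<bar>- \<sigma> * t powr (- xi - 1)\<bar> * gev_weight mu \<sigma> xi (gev_T_inv mu \<sigma> xi t) = 1"
proof -
  note s = gev_T_gev_T_inv[OF t]
  have "gev_weight mu \<sigma> xi (gev_T_inv mu \<sigma> xi t) = exp ((1 + xi) * ln t) / \<sigma>"
    using s gev_h_eq_ln_gev_T[OF s(1)] by (simp add: gev_weight_def algebra_simps)
  also have "exp ((1 + xi) * ln t) = t powr (1 + xi)" using t by (simp add: powr_def)
  finally show ?thesis using \<sigma>_pos t by (simp add: abs_mult powr_add[symmetric])
qed

lemma nn_integral_gev_weight:
  assumes G: "G \<in> borel_measurable borel" "\<And>t. 0 < t \<Longrightarrow> 0 \<le> G t"
  shows "(\<integral>\<^sup>+y. ennreal (gev_weight mu \<sigma> xi y * G (gev_T mu \<sigma> xi y)) \<partial>lborel)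
       = (\<integral>\<^sup>+t. ennreal (indicator {0<..} t * G t) \<partial>lborel)"
proof -
  let ?w = "gev_weight mu \<sigma> xi" and ?T = "gev_T mu \<sigma> xi" and ?Ti = "gev_T_inv mu \<sigma> xi"
  let ?S = "?Ti ` {0<..}"
  have jac: "indicator {0<..} t * (\<bar>- \<sigma> * t powr (- xi - 1)\<bar> * (?w (?Ti t) * G (?T (?Ti t))))
      = indicator {0<..} t * G t" for t
    using gev_weight_gev_T_inv[of t] gev_T_gev_T_inv(2)[of t]
    by (cases "t > 0") (simp_all add: mult.assoc[symmetric])
  have "(\<integral>\<^sup>+y. ennreal (?w y * G (?T y)) \<partial>lborel)
      = (\<integral>\<^sup>+y. ennreal (indicator ?S y * (?w y * G (?T y))) \<partial>lborel)"
    by (intro nn_integral_cong) (simp add: gev_T_inv_image indicator_def gev_weight_eq_0)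
  also have "\<dots> = (\<integral>\<^sup>+t. ennreal (indicator {0<..} t
                       * (\<bar>- \<sigma> * t powr (- xi - 1)\<bar> * (?w (?Ti t) * G (?T (?Ti t))))) \<partial>lborel)"
  proof (rule nn_integral_change_variables_inj)
    show "0 \<le> ?w (?Ti t) * G (?T (?Ti t))" if "t \<in> {0<..}" for t
      using that gev_T_gev_T_inv[of t] G(2)[of t] gev_weight_nonneg by simp
    show "(\<lambda>y. indicator ?S y * (?w y * G (?T y))) \<in> borel_measurable borel"
      unfolding gev_T_inv_image using G(1) by measurable
    show "(\<lambda>t. indicator {0<..} t * (\<bar>- \<sigma> * t powr (- xi - 1)\<bar> * (?w (?Ti t) * G (?T (?Ti t)))))
            \<in> borel_measurable borel"
      unfolding jac using G(1) by measurable
    show "(?Ti has_field_derivative (- \<sigma> * t powr (- xi - 1))) (at t)" if "t \<in> {0<..}" for t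
      using that by (intro has_field_derivative_gev_T_inv) simp
  qed (simp_all add: inj_on_gev_T_inv)
  also have "\<dots> = (\<integral>\<^sup>+t. ennreal (indicator {0<..} t * G t) \<partial>lborel)"
    unfolding jac ..
  finally show ?thesis .
qed

lemma nn_integral_gev_tail:
  assumes c: "gev_support mu \<sigma> xi c"
  shows "(\<integral>\<^sup>+v. ennreal (indicator {..<c} v * (exp (- gev_T mu \<sigma> xi v) * gev_weight mu \<sigma> xi v)) \<partial>lborel)
       = ennreal (exp (- gev_T mu \<sigma> xi c))"
proof -
  let ?T = "gev_T mu \<sigma> xi"
  have "(\<integral>\<^sup>+v. ennreal (indicator {..<c} v * (exp (- ?T v) * gev_weight mu \<sigma> xi v)) \<partial>lborel)
      = (\<integral>\<^sup>+v. ennreal (gev_weight mu \<sigma> xi v * (indicator {?T c<..} (?T v) * exp (- ?T v))) \<partial>lborel)"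
  proof (intro nn_integral_cong)
    fix v
    show "ennreal (indicator {..<c} v * (exp (- ?T v) * gev_weight mu \<sigma> xi v))
        = ennreal (gev_weight mu \<sigma> xi v * (indicator {?T c<..} (?T v) * exp (- ?T v)))"
    proof (cases "gev_support mu \<sigma> xi v")
      case True
      then show ?thesis using gev_T_less_iff[OF True c] by (simp add: indicator_def mult.commute)
    qed (simp add: gev_weight_eq_0)
  qed
  also have "\<dots> = (\<integral>\<^sup>+t. ennreal (indicator {0<..} t * (indicator {?T c<..} t * exp (- t))) \<partial>lborel)"
    by (rule nn_integral_gev_weight) auto
  also have "\<dots> = (\<integral>\<^sup>+t. ennreal (indicator {?T c<..} t * exp (- t)) \<partial>lborel)"
    using gev_T_pos[OF c] by (intro nn_integral_cong) (simp add: indicator_def)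
  finally show ?thesis by (simp add: nn_integral_exp_minus_tail)
qed

end

section \<open>Decreasing tuples and the GEV\<open>\<^sub>r\<close> density\<close>

definition desc_above :: "nat \<Rightarrow> real \<Rightarrow> (nat \<Rightarrow> real) \<Rightarrow> bool" where
  "desc_above n c y \<longleftrightarrow> (\<forall>j\<in>{1..<n}. y (Suc j) < y j) \<and> (0 < n \<longrightarrow> c < y n)"

definition gev_chain_weight :: "real \<Rightarrow> real \<Rightarrow> real \<Rightarrow> nat \<Rightarrow> real \<Rightarrow> (nat \<Rightarrow> real) \<Rightarrow> real" where
  "gev_chain_weight mu \<sigma> xi n c y =
     (if desc_above n c y then \<Prod>j\<in>{1..n}. gev_weight mu \<sigma> xi (y j) else 0)"

lemma borel_measurable_gev_chain_weight[measurable]: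
  "gev_chain_weight mu \<sigma> xi n c \<in> borel_measurable (PiM {1..n} (\<lambda>_. lborel))"
  unfolding gev_chain_weight_def[abs_def] desc_above_def by measurable

lemma desc_above_fun_upd: "n < m \<Longrightarrow> desc_above n c (y(m := u)) \<longleftrightarrow> desc_above n c y"
  by (auto simp: desc_above_def)

lemma gev_chain_weight_fun_upd:
  "n < m \<Longrightarrow> gev_chain_weight mu \<sigma> xi n c (y(m := u)) = gev_chain_weight mu \<sigma> xi n c y"
  by (auto simp: gev_chain_weight_def desc_above_fun_upd intro!: prod.cong)

lemma gev_chain_weight_Suc:
  "gev_chain_weight mu \<sigma> xi (Suc n) c (y(Suc n := u))
     = (if c < u then gev_weight mu \<sigma> xi u * gev_chain_weight mu \<sigma> xi n u y else 0)"
proof -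
  have "desc_above (Suc n) c (y(Suc n := u)) \<longleftrightarrow> desc_above n u y \<and> c < u"
    by (auto simp: desc_above_def less_Suc_eq)
  moreover have "(\<Prod>j\<in>{1..Suc n}. gev_weight mu \<sigma> xi ((y(Suc n := u)) j))
      = gev_weight mu \<sigma> xi u * (\<Prod>j\<in>{1..n}. gev_weight mu \<sigma> xi (y j))"
    by (simp add: atLeastAtMostSuc_conv prod.insert)
  ultimately show ?thesis by (simp add: gev_chain_weight_def)
qed

lemma prod_gev_weight:
  assumes "\<forall>j\<in>{1..r}. gev_support mu \<sigma> xi (y j)"
  shows "(\<Prod>j\<in>{1..r}. gev_weight mu \<sigma> xi (y j))
       = exp (- (\<Sum>j = 1..r. gev_h xi (gev_z mu \<sigma> (y j)))) / \<sigma> ^ r"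
proof -
  let ?h = "\<lambda>j. gev_h xi (gev_z mu \<sigma> (y j))"
  have "(\<Prod>j\<in>{1..r}. gev_weight mu \<sigma> xi (y j)) = (\<Prod>j\<in>{1..r}. exp (- ?h j) / \<sigma>)"
    using assms by (intro prod.cong) (auto simp: gev_weight_def)
  also have "\<dots> = (\<Prod>j\<in>{1..r}. exp (- ?h j)) / \<sigma> ^ r"
    by (simp only: prod_dividef card_atLeastAtMost prod_constant diff_Suc_1)
  also have "(\<Prod>j\<in>{1..r}. exp (- ?h j)) = exp (- (\<Sum>j = 1..r. ?h j))"
    by (subst sum_negf[symmetric], subst exp_sum) simp_all
  finally show ?thesis .
qed

lemma gev_r_density_eq:
  assumes "\<sigma> > 0"
  shows "gev_r_density r mu \<sigma> xi y = (if \<forall>j\<in>{1..<r}. y (Suc j) < y j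
      then exp (- gev_T mu \<sigma> xi (y r)) * (\<Prod>j\<in>{1..r}. gev_weight mu \<sigma> xi (y j)) else 0)"
proof (cases "\<forall>j\<in>{1..r}. gev_support mu \<sigma> xi (y j)")
  case True
  let ?T = "gev_T mu \<sigma> xi (y r)" and ?S = "\<Sum>j = 1..r. gev_h xi (gev_z mu \<sigma> (y j))"
  have "\<sigma> powi (- int r) * exp (- ?T - ?S) = exp (- ?T) * (exp (- ?S) / \<sigma> ^ r)"
    by (simp only: power_int_minus power_int_of_nat exp_diff exp_minus) (simp add: field_simps)
  then show ?thesis
    using True unfolding gev_r_density_def prod_gev_weight[OF True]
    by (simp add: gev_support_def gev_T_def)
next
  case False
  then obtain j where "j \<in> {1..r}" "gev_weight mu \<sigma> xi (y j) = 0"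
    using gev_weight_eq_0 by blast
  then have P0: "(\<Prod>j\<in>{1..r}. gev_weight mu \<sigma> xi (y j)) = 0" by (intro prod_zero) auto
  have "\<not> (\<forall>j\<in>{1..r}. gev_supp xi (gev_z mu \<sigma> (y j)))"
    using False unfolding gev_support_def .
  then have "gev_r_density r mu \<sigma> xi y = 0"
    unfolding gev_r_density_def by (intro if_not_P) blast
  then show ?thesis by (simp only: P0 mult_zero_right if_cancel)
qed

lemma gev_r_density_Suc:
  assumes "\<sigma> > 0"
  shows "gev_r_density (Suc n) mu \<sigma> xi y
    = exp (- gev_T mu \<sigma> xi (y (Suc n))) * gev_weight mu \<sigma> xi (y (Suc n))
      * gev_chain_weight mu \<sigma> xi n (y (Suc n)) y"
proof -
  have "(\<forall>j\<in>{1..<Suc n}. y (Suc j) < y j) \<longleftrightarrow> desc_above n (y (Suc n)) y"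
    by (auto simp: desc_above_def less_Suc_eq)
  moreover have "(\<Prod>j\<in>{1..Suc n}. gev_weight mu \<sigma> xi (y j))
      = gev_weight mu \<sigma> xi (y (Suc n)) * (\<Prod>j\<in>{1..n}. gev_weight mu \<sigma> xi (y j))"
    by (simp add: atLeastAtMostSuc_conv prod.insert)
  ultimately show ?thesis
    unfolding gev_r_density_eq[OF assms] by (simp add: gev_chain_weight_def mult.assoc)
qed

lemma borel_measurable_gev_chain_weight_last[measurable]:
  "(\<lambda>y. gev_chain_weight mu \<sigma> xi n (y (Suc n)) y) \<in> borel_measurable (PiM {1..Suc n} (\<lambda>_. lborel))"
  unfolding gev_chain_weight_def[abs_def] desc_above_def by measurable

lemma borel_measurable_gev_r_density:
  assumes "\<sigma> > 0"
  shows "gev_r_density (Suc n) mu \<sigma> xi \<in> borel_measurable (PiM {1..Suc n} (\<lambda>_. lborel))"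
  unfolding gev_r_density_Suc[OF assms, abs_def] by measurable

section \<open>Laws of the last two coordinates\<close>

context
  fixes mu \<sigma> xi :: real
  assumes \<sigma>_pos: "\<sigma> > 0"
begin

lemma gev_chain_weight_nonneg: "0 \<le> gev_chain_weight mu \<sigma> xi n c y"
  by (simp add: gev_chain_weight_def prod_nonneg gev_weight_nonneg[OF \<sigma>_pos])

lemma nn_integral_gev_chain_weight:
  assumes "gev_support mu \<sigma> xi c"
  shows "(\<integral>\<^sup>+y. ennreal (gev_chain_weight mu \<sigma> xi n c y) \<partial>PiM {1..n} (\<lambda>_. lborel))
    = ennreal (gev_T mu \<sigma> xi c ^ n / fact n)"
  using assms
proof (induction n arbitrary: c)
  case 0
  then show ?case
    by (simp add: PiM_empty nn_integral_count_space_finite gev_chain_weight_def desc_above_def)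
next
  case (Suc n c)
  let ?w = "gev_weight mu \<sigma> xi" and ?T = "gev_T mu \<sigma> xi" and ?cw = "gev_chain_weight mu \<sigma> xi"
  have "(\<integral>\<^sup>+y. ennreal (?cw (Suc n) c y) \<partial>PiM {1..Suc n} (\<lambda>_. lborel))
      = (\<integral>\<^sup>+u. (\<integral>\<^sup>+y. ennreal (?cw (Suc n) c (y(Suc n := u))) \<partial>PiM {1..n} (\<lambda>_. lborel)) \<partial>lborel)"
    by (rule nn_integral_PiM_Suc_inner) measurable
  also have "\<dots> = (\<integral>\<^sup>+u. ennreal (?w u * (indicator {0<..<?T c} (?T u) * (?T u ^ n / fact n))) \<partial>lborel)"
  proof (intro nn_integral_cong)
    fix u
    have "(\<integral>\<^sup>+y. ennreal (?cw (Suc n) c (y(Suc n := u))) \<partial>PiM {1..n} (\<lambda>_. lborel))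
        = (\<integral>\<^sup>+y. ennreal (indicator {c<..} u * ?w u) * ennreal (?cw n u y) \<partial>PiM {1..n} (\<lambda>_. lborel))"
      by (intro nn_integral_cong)
        (simp add: gev_chain_weight_Suc ennreal_mult'[symmetric] gev_weight_nonneg[OF \<sigma>_pos])
    also have "\<dots> = ennreal (indicator {c<..} u * ?w u)
        * (\<integral>\<^sup>+y. ennreal (?cw n u y) \<partial>PiM {1..n} (\<lambda>_. lborel))"
      by (rule nn_integral_cmult) measurable
    also have "\<dots> = ennreal (?w u * (indicator {0<..<?T c} (?T u) * (?T u ^ n / fact n)))"
    proof (cases "gev_support mu \<sigma> xi u")
      case True
      have "indicator {c<..} u = (indicator {0<..<?T c} (?T u) :: real)"
        using gev_T_pos[OF \<sigma>_pos True] gev_T_less_iff[OF \<sigma>_pos Suc.prems True]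
        by (simp add: indicator_def)
      then show ?thesis
        using Suc.IH[OF True] gev_T_pos[OF \<sigma>_pos True]
        by (simp add: ennreal_mult'[symmetric] gev_weight_nonneg[OF \<sigma>_pos] mult_ac)
    qed (simp add: gev_weight_eq_0)
    finally show "(\<integral>\<^sup>+y. ennreal (?cw (Suc n) c (y(Suc n := u))) \<partial>PiM {1..n} (\<lambda>_. lborel))
        = ennreal (?w u * (indicator {0<..<?T c} (?T u) * (?T u ^ n / fact n)))" .
  qed
  also have "\<dots> = (\<integral>\<^sup>+t. ennreal (indicator {0<..} t * (indicator {0<..<?T c} t * (t ^ n / fact n))) \<partial>lborel)"
    by (rule nn_integral_gev_weight[OF \<sigma>_pos]) auto
  also have "\<dots> = (\<integral>\<^sup>+t. ennreal (indicator {0<..<?T c} t * (t ^ n / fact n)) \<partial>lborel)"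
    by (intro nn_integral_cong) (simp add: indicator_def)
  also have "\<dots> = ennreal (?T c ^ Suc n / fact (Suc n))"
    using gev_T_pos[OF \<sigma>_pos Suc.prems] by (intro nn_integral_power_div_fact) simp
  finally show ?case .
qed

lemma nn_integral_gev_r_density_marginal:
  "(\<integral>\<^sup>+v. ennreal (gev_r_density (Suc (Suc n)) mu \<sigma> xi (y(Suc (Suc n) := v))) \<partial>lborel)
     = ennreal (gev_r_density (Suc n) mu \<sigma> xi y)"
proof -
  let ?w = "gev_weight mu \<sigma> xi" and ?T = "gev_T mu \<sigma> xi" and ?u = "y (Suc n)"
  let ?K = "?w ?u * gev_chain_weight mu \<sigma> xi n ?u y"
  have K: "0 \<le> ?K" by (simp add: gev_weight_nonneg[OF \<sigma>_pos] gev_chain_weight_nonneg)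
  have "gev_chain_weight mu \<sigma> xi (Suc n) v y = gev_chain_weight mu \<sigma> xi (Suc n) v (y(Suc n := ?u))" for v
    by simp
  then have dens: "gev_r_density (Suc (Suc n)) mu \<sigma> xi (y(Suc (Suc n) := v))
      = ?K * (indicator {..<?u} v * (exp (- ?T v) * ?w v))" for v
    by (simp only: gev_r_density_Suc[OF \<sigma>_pos] gev_chain_weight_fun_upd gev_chain_weight_Suc)
      (simp add: indicator_def)
  have "(\<integral>\<^sup>+v. ennreal (gev_r_density (Suc (Suc n)) mu \<sigma> xi (y(Suc (Suc n) := v))) \<partial>lborel)
      = ennreal ?K * (\<integral>\<^sup>+v. ennreal (indicator {..<?u} v * (exp (- ?T v) * ?w v)) \<partial>lborel)"
    unfolding dens using K
    by (subst nn_integral_cmult[symmetric]) (auto simp: ennreal_mult' intro!: nn_integral_cong)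
  also have "\<dots> = ennreal (exp (- ?T ?u) * ?K)"
  proof (cases "gev_support mu \<sigma> xi ?u")
    case True
    have "ennreal ?K * ennreal (exp (- ?T ?u)) = ennreal (exp (- ?T ?u) * ?K)"
      using K by (simp add: ennreal_mult'[symmetric] mult.commute)
    then show ?thesis by (simp only: nn_integral_gev_tail[OF \<sigma>_pos True])
  qed (simp add: gev_weight_eq_0)
  also have "\<dots> = ennreal (gev_r_density (Suc n) mu \<sigma> xi y)"
    by (simp add: gev_r_density_Suc[OF \<sigma>_pos] mult.assoc)
  finally show ?thesis .
qed

lemma nn_integral_gev_r_measure:
  assumes g: "g \<in> borel_measurable (PiM {1..Suc n} (\<lambda>_. lborel))" "\<And>y. 0 \<le> g y"
  shows "(\<integral>\<^sup>+y. ennreal (g y) \<partial>gev_r_measure (Suc n) mu \<sigma> xi)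
       = (\<integral>\<^sup>+y. ennreal (gev_r_density (Suc n) mu \<sigma> xi y * g y) \<partial>PiM {1..Suc n} (\<lambda>_. lborel))"
  unfolding gev_r_measure_def using g borel_measurable_gev_r_density[OF \<sigma>_pos]
  by (subst nn_integral_density) (auto intro!: nn_integral_cong simp: ennreal_mult'')

lemma gev_r_density_Suc_fun_upd:
  "gev_r_density (Suc n) mu \<sigma> xi (y(Suc n := u))
     = exp (- gev_T mu \<sigma> xi u) * gev_weight mu \<sigma> xi u * gev_chain_weight mu \<sigma> xi n u y"
  by (simp add: gev_r_density_Suc[OF \<sigma>_pos] gev_chain_weight_fun_upd)

lemma nn_integral_gev_r_density_fun_upd:
  "(\<integral>\<^sup>+y. ennreal (gev_r_density (Suc n) mu \<sigma> xi (y(Suc n := u))) \<partial>PiM {1..n} (\<lambda>_. lborel))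
     = ennreal (gev_weight mu \<sigma> xi u * (exp (- gev_T mu \<sigma> xi u) * (gev_T mu \<sigma> xi u ^ n / fact n)))"
proof -
  let ?w = "gev_weight mu \<sigma> xi" and ?T = "gev_T mu \<sigma> xi"
  let ?c = "exp (- ?T u) * ?w u"
  have c: "0 \<le> ?c" using gev_weight_nonneg[OF \<sigma>_pos] by simp
  have "(\<integral>\<^sup>+y. ennreal (gev_r_density (Suc n) mu \<sigma> xi (y(Suc n := u))) \<partial>PiM {1..n} (\<lambda>_. lborel))
      = (\<integral>\<^sup>+y. ennreal ?c * ennreal (gev_chain_weight mu \<sigma> xi n u y) \<partial>PiM {1..n} (\<lambda>_. lborel))"
    by (simp only: gev_r_density_Suc_fun_upd ennreal_mult'[OF c])
  also have "\<dots> = ennreal ?c * (\<integral>\<^sup>+y. ennreal (gev_chain_weight mu \<sigma> xi n u y) \<partial>PiM {1..n} (\<lambda>_. lborel))"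
    by (rule nn_integral_cmult) measurable
  also have "\<dots> = ennreal (?w u * (exp (- ?T u) * (?T u ^ n / fact n)))"
  proof (cases "gev_support mu \<sigma> xi u")
    case True
    have "ennreal ?c * ennreal (?T u ^ n / fact n) = ennreal (?w u * (exp (- ?T u) * (?T u ^ n / fact n)))"
      by (simp only: ennreal_mult'[OF c, symmetric]) (simp add: mult_ac)
    then show ?thesis by (simp only: nn_integral_gev_chain_weight[OF True])
  qed (simp add: gev_weight_eq_0)
  finally show ?thesis .
qed

lemma nn_integral_gev_r_measure_last:
  assumes G: "G \<in> borel_measurable borel" "\<And>t. 0 \<le> G t"
  shows "(\<integral>\<^sup>+y. ennreal (G (gev_T mu \<sigma> xi (y (Suc n)))) \<partial>gev_r_measure (Suc n) mu \<sigma> xi)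
       = (\<integral>\<^sup>+t. ennreal (erlang_density n 1 t * G t) \<partial>lborel)"
proof -
  let ?w = "gev_weight mu \<sigma> xi" and ?T = "gev_T mu \<sigma> xi"
  let ?f = "\<lambda>y. ennreal (gev_r_density (Suc n) mu \<sigma> xi y * G (?T (y (Suc n))))"
  note [measurable] = G(1) borel_measurable_gev_r_density[OF \<sigma>_pos]
  have "(\<integral>\<^sup>+y. ennreal (G (?T (y (Suc n)))) \<partial>gev_r_measure (Suc n) mu \<sigma> xi)
      = (\<integral>\<^sup>+y. ?f y \<partial>PiM {1..Suc n} (\<lambda>_. lborel))"
    by (rule nn_integral_gev_r_measure) (measurable, simp add: G(2))
  also have "\<dots> = (\<integral>\<^sup>+u. (\<integral>\<^sup>+y. ?f (y(Suc n := u)) \<partial>PiM {1..n} (\<lambda>_. lborel)) \<partial>lborel)"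
    by (rule nn_integral_PiM_Suc_inner) measurable
  also have "\<dots> = (\<integral>\<^sup>+u. ennreal (?w u * (exp (- ?T u) * G (?T u) * (?T u ^ n / fact n))) \<partial>lborel)"
  proof (intro nn_integral_cong)
    fix u
    have "(\<integral>\<^sup>+y. ?f (y(Suc n := u)) \<partial>PiM {1..n} (\<lambda>_. lborel))
        = (\<integral>\<^sup>+y. ennreal (G (?T u)) * ennreal (gev_r_density (Suc n) mu \<sigma> xi (y(Suc n := u)))
            \<partial>PiM {1..n} (\<lambda>_. lborel))"
      using G(2) by (intro nn_integral_cong) (simp add: ennreal_mult'[symmetric] mult.commute)
    also have "\<dots> = ennreal (G (?T u))
        * (\<integral>\<^sup>+y. ennreal (gev_r_density (Suc n) mu \<sigma> xi (y(Suc n := u))) \<partial>PiM {1..n} (\<lambda>_. lborel))"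
      unfolding gev_r_density_Suc_fun_upd by (rule nn_integral_cmult) measurable
    also have "\<dots> = ennreal (G (?T u)) * ennreal (?w u * (exp (- ?T u) * (?T u ^ n / fact n)))"
      by (simp only: nn_integral_gev_r_density_fun_upd)
    also have "\<dots> = ennreal (?w u * (exp (- ?T u) * G (?T u) * (?T u ^ n / fact n)))"
      using G(2) by (simp add: ennreal_mult'[symmetric] mult_ac)
    finally show "(\<integral>\<^sup>+y. ?f (y(Suc n := u)) \<partial>PiM {1..n} (\<lambda>_. lborel))
        = ennreal (?w u * (exp (- ?T u) * G (?T u) * (?T u ^ n / fact n)))" .
  qed
  also have "\<dots> = (\<integral>\<^sup>+t. ennreal (indicator {0<..} t * (exp (- t) * G t * (t ^ n / fact n))) \<partial>lborel)"
    using G by (intro nn_integral_gev_weight[OF \<sigma>_pos]) auto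
  also have "\<dots> = (\<integral>\<^sup>+t. ennreal (erlang_density n 1 t * G t) \<partial>lborel)"
  proof (rule nn_integral_cong_AE)
    show "AE t in lborel. ennreal (indicator {0<..} t * (exp (- t) * G t * (t ^ n / fact n)))
        = ennreal (erlang_density n 1 t * G t)"
      using AE_lborel_singleton[of 0]
      by eventually_elim (auto simp: indicator_def erlang_density_def mult_ac)
  qed
  finally show ?thesis .
qed

lemma nn_integral_gev_r_measure_prev:
  assumes G: "G \<in> borel_measurable borel" "\<And>t. 0 \<le> G t"
  shows "(\<integral>\<^sup>+y. ennreal (G (gev_T mu \<sigma> xi (y (Suc n)))) \<partial>gev_r_measure (Suc (Suc n)) mu \<sigma> xi)
       = (\<integral>\<^sup>+t. ennreal (erlang_density n 1 t * G t) \<partial>lborel)"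
proof -
  let ?g = "\<lambda>y. G (gev_T mu \<sigma> xi (y (Suc n)))"
  let ?f = "\<lambda>m y. ennreal (gev_r_density m mu \<sigma> xi y * ?g y)"
  note [measurable] = G(1) borel_measurable_gev_r_density[OF \<sigma>_pos]
  have "(\<integral>\<^sup>+y. ennreal (?g y) \<partial>gev_r_measure (Suc (Suc n)) mu \<sigma> xi)
      = (\<integral>\<^sup>+y. ?f (Suc (Suc n)) y \<partial>PiM {1..Suc (Suc n)} (\<lambda>_. lborel))"
    by (rule nn_integral_gev_r_measure) (measurable, simp add: G(2))
  also have "\<dots> = (\<integral>\<^sup>+y. (\<integral>\<^sup>+v. ?f (Suc (Suc n)) (y(Suc (Suc n) := v)) \<partial>lborel) \<partial>PiM {1..Suc n} (\<lambda>_. lborel))"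
    by (rule nn_integral_PiM_Suc_outer) measurable
  also have "\<dots> = (\<integral>\<^sup>+y. ?f (Suc n) y \<partial>PiM {1..Suc n} (\<lambda>_. lborel))"
  proof (intro nn_integral_cong)
    fix y :: "nat \<Rightarrow> real"
    assume y: "y \<in> space (PiM {1..Suc n} (\<lambda>_. lborel))"
    have "{1..Suc (Suc n)} = insert (Suc (Suc n)) {1..Suc n}" by auto
    then have [measurable]: "(\<lambda>v. y(Suc (Suc n) := v)) \<in> lborel \<rightarrow>\<^sub>M PiM {1..Suc (Suc n)} (\<lambda>_. lborel)"
      using measurable_component_update[OF y, of "Suc (Suc n)"] by simp
    have "(\<integral>\<^sup>+v. ?f (Suc (Suc n)) (y(Suc (Suc n) := v)) \<partial>lborel)
        = (\<integral>\<^sup>+v. ennreal (?g y) * ennreal (gev_r_density (Suc (Suc n)) mu \<sigma> xi (y(Suc (Suc n) := v))) \<partial>lborel)"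
      using G(2) by (intro nn_integral_cong) (simp add: ennreal_mult'[symmetric] mult.commute)
    also have "\<dots> = ennreal (?g y) * ennreal (gev_r_density (Suc n) mu \<sigma> xi y)"
      by (subst nn_integral_cmult) (measurable, simp add: nn_integral_gev_r_density_marginal)
    also have "\<dots> = ?f (Suc n) y"
      using G(2) by (simp add: ennreal_mult'' mult.commute)
    finally show "(\<integral>\<^sup>+v. ?f (Suc (Suc n)) (y(Suc (Suc n) := v)) \<partial>lborel) = ?f (Suc n) y" .
  qed
  also have "\<dots> = (\<integral>\<^sup>+y. ennreal (?g y) \<partial>gev_r_measure (Suc n) mu \<sigma> xi)"
    by (rule nn_integral_gev_r_measure[symmetric]) (measurable, simp add: G(2))
  finally show ?thesis using nn_integral_gev_r_measure_last[OF G] by simp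
qed

lemma distributed_gev_T_last:
  "distributed (gev_r_measure (Suc n) mu \<sigma> xi) lborel (\<lambda>y. gev_T mu \<sigma> xi (y (Suc n)))
     (erlang_density n 1)"
proof (rule distributed_lborelI)
  have "(\<lambda>y. y (Suc n)) \<in> borel_measurable (PiM {1..Suc n} (\<lambda>_. lborel :: real measure))"
    using measurable_component_singleton[of "Suc n" "{1..Suc n}" "\<lambda>_. lborel"] by simp
  then show "(\<lambda>y. gev_T mu \<sigma> xi (y (Suc n))) \<in> borel_measurable (gev_r_measure (Suc n) mu \<sigma> xi)"
    by (simp add: gev_r_measure_def)
qed (simp_all add: nn_integral_gev_r_measure_last)

lemma distributed_gev_T_prev:
  "distributed (gev_r_measure (Suc (Suc n)) mu \<sigma> xi) lborel (\<lambda>y. gev_T mu \<sigma> xi (y (Suc n)))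
     (erlang_density n 1)"
proof (rule distributed_lborelI)
  have "(\<lambda>y. y (Suc n)) \<in> borel_measurable (PiM {1..Suc (Suc n)} (\<lambda>_. lborel :: real measure))"
    using measurable_component_singleton[of "Suc n" "{1..Suc (Suc n)}" "\<lambda>_. lborel"] by simp
  then show "(\<lambda>y. gev_T mu \<sigma> xi (y (Suc n))) \<in> borel_measurable (gev_r_measure (Suc (Suc n)) mu \<sigma> xi)"
    by (simp add: gev_r_measure_def)
qed (simp_all add: nn_integral_gev_r_measure_prev)

lemma prob_space_gev_r_measure: "prob_space (gev_r_measure (Suc n) mu \<sigma> xi)"
  using distributed_gev_T_last[of n]
  by (intro prob_space_distrD[of "\<lambda>y. gev_T mu \<sigma> xi (y (Suc n))" _ lborel])
    (auto simp: distributed_def prob_space_erlang_density)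

lemma AE_gev_D_eq:
  "AE y in gev_r_measure (Suc n) mu \<sigma> xi.
     gev_D (Suc n) mu \<sigma> xi y = - ln \<sigma> - gev_T mu \<sigma> xi (y (Suc n)) + gev_T mu \<sigma> xi (y n)
       + (1 + xi) * ln (gev_T mu \<sigma> xi (y (Suc n)))" (is "AE y in _. ?eq y")
  unfolding gev_r_measure_def
proof (subst AE_density)
  show "(\<lambda>y. ennreal (gev_r_density (Suc n) mu \<sigma> xi y)) \<in> borel_measurable (PiM {1..Suc n} (\<lambda>_. lborel))"
    using borel_measurable_gev_r_density[OF \<sigma>_pos] by measurable
  show "AE y in PiM {1..Suc n} (\<lambda>_. lborel). 0 < ennreal (gev_r_density (Suc n) mu \<sigma> xi y) \<longrightarrow> ?eq y"
  proof (intro AE_I2 impI)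
    fix y :: "nat \<Rightarrow> real"
    assume "0 < ennreal (gev_r_density (Suc n) mu \<sigma> xi y)"
    then have "gev_r_density (Suc n) mu \<sigma> xi y \<noteq> 0" by auto
    then have "gev_support mu \<sigma> xi (y (Suc n))"
      by (auto simp: gev_r_density_def gev_support_def split: if_splits)
    from gev_h_eq_ln_gev_T[OF \<sigma>_pos this] show "?eq y"
      by (simp add: gev_D_def gev_T_def algebra_simps)
  qed
qed

end

lemma borel_measurable_gev_D:
  "gev_D (Suc (Suc n)) mu \<sigma> xi \<in> borel_measurable (gev_r_measure (Suc (Suc n)) mu \<sigma> xi)"
  unfolding gev_r_measure_def measurable_density_eq1 gev_D_def gev_t_def gev_h_def gev_z_def
  by measurable

theorem mainTheorem2:
  fixes r :: nat and mu \<sigma> xi :: real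
  assumes "r \<ge> 2" and "\<sigma> > 0"
  shows "integrable (gev_r_measure r mu \<sigma> xi) (gev_D r mu \<sigma> xi)
    \<and> (\<integral>y. gev_D r mu \<sigma> xi y \<partial>gev_r_measure r mu \<sigma> xi)
        = - ln \<sigma> - 1 + (1 + xi) * Digamma (real r)
    \<and> integrable (gev_r_measure r mu \<sigma> xi) (\<lambda>y. (gev_D r mu \<sigma> xi y)\<^sup>2)"
proof -
  obtain n where r: "r = Suc (Suc n)" using assms(1) by (metis add_2_eq_Suc le_Suc_ex)
  let ?M = "gev_r_measure r mu \<sigma> xi" and ?T = "gev_T mu \<sigma> xi"
  let ?F = "\<lambda>y. - ln \<sigma> - ?T (y r) + ?T (y (Suc n)) + (1 + xi) * ln (?T (y r))"
  interpret prob_space ?M unfolding r by (rule prob_space_gev_r_measure[OF assms(2)])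
  have X: "distributed ?M lborel (\<lambda>y. ?T (y r)) (erlang_density (Suc n) 1)"
    unfolding r by (rule distributed_gev_T_last[OF assms(2)])
  have Y: "distributed ?M lborel (\<lambda>y. ?T (y (Suc n))) (erlang_density n 1)"
    unfolding r by (rule distributed_gev_T_prev[OF assms(2)])
  note F = erlang_log_statistic[OF X Y, of "- ln \<sigma>" "1 + xi"]
  have AE: "AE y in ?M. gev_D r mu \<sigma> xi y = ?F y"
    unfolding r using AE_gev_D_eq[OF assms(2), of "Suc n" mu xi] by simp
  then have AE2: "AE y in ?M. (gev_D r mu \<sigma> xi y)\<^sup>2 = (?F y)\<^sup>2" by eventually_elim simp
  have mD: "gev_D r mu \<sigma> xi \<in> borel_measurable ?M" unfolding r by (rule borel_measurable_gev_D)
  have mD2: "(\<lambda>y. (gev_D r mu \<sigma> xi y)\<^sup>2) \<in> borel_measurable ?M" using mD by measurable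
  have "real r = real n + 2" by (simp add: r)
  then show ?thesis
    using F integrable_cong_AE[OF mD borel_measurable_integrable[OF F(1)] AE]
      integral_cong_AE[OF mD borel_measurable_integrable[OF F(1)] AE]
      integrable_cong_AE[OF mD2 borel_measurable_integrable[OF F(3)] AE2]
    by simp
qed

end
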